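(* Let $L$ be an atomic $0$-distributive lattice with at least three atoms. Then $\operatorname{sdim}_M(G^c(L))$ is finite if and only if $G^c(L)$ is finite.
   Context: A lattice $L$ with $0$ is $0$-distributive if $a\wedge b=0$ and $a\wedge c=0$ imply $a\wedge(b\vee c)=0$; atomic means every nonzero element lies above an atom. $Z^*(L)=\{a\in L\setminus\{0\}:\ a\wedge b=0\text{ for some } b\neq 0\}$; $G^c(L)$ has vertex set $Z^*(L)$, distinct $a,b$ adjacent iff $a\wedge b\neq 0$ (connected under these hypotheses). For a connected graph $G$, a vertex $w$ strongly resolves $u,v$ if some shortest $u$–$w$ path contains $v$ or some shortest $v$–$w$ path contains $u$; a strong resolving set is a set $W$ such that every pair of distinct vertices is strongly resolved by some vertex of $W$; $\operatorname{sdim}_M(G)$ is the minimum cardinality of a strong resolving set. *)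

theory Defs
  imports Main "HOL-Library.Extended_Nat"
begin

definition zero_distributive :: "'a::bounded_lattice_bot itself \<Rightarrow> bool" where
  "zero_distributive _ \<longleftrightarrow>
     (\<forall>a b c::'a. inf a b = bot \<and> inf a c = bot \<longrightarrow> inf a (sup b c) = bot)"

definition is_atom :: "'a::bounded_lattice_bot \<Rightarrow> bool" where
  "is_atom a \<longleftrightarrow> a \<noteq> bot \<and> (\<forall>x. x \<le> a \<longrightarrow> x = bot \<or> x = a)"

definition atomic_lattice :: "'a::bounded_lattice_bot itself \<Rightarrow> bool" where
  "atomic_lattice _ \<longleftrightarrow> (\<forall>x::'a. x \<noteq> bot \<longrightarrow> (\<exists>a. is_atom a \<and> a \<le> x))"

definition Zstar :: "'a::bounded_lattice_bot set" where
  "Zstar = {a. a \<noteq> bot \<and> (\<exists>b. b \<noteq> bot \<and> inf a b = bot)}"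

text \<open>Adjacency of the graph G^c(L) on vertex set Zstar.\<close>
definition Gc_adj :: "'a::bounded_lattice_bot \<Rightarrow> 'a \<Rightarrow> bool" where
  "Gc_adj a b \<longleftrightarrow> a \<noteq> b \<and> inf a b \<noteq> bot"

definition gpath :: "'v set \<Rightarrow> ('v \<Rightarrow> 'v \<Rightarrow> bool) \<Rightarrow> 'v list \<Rightarrow> bool" where
  "gpath V E p \<longleftrightarrow> p \<noteq> [] \<and> set p \<subseteq> V \<and> (\<forall>i. Suc i < length p \<longrightarrow> E (p!i) (p!Suc i))"

definition gpath_from_to :: "'v set \<Rightarrow> ('v \<Rightarrow> 'v \<Rightarrow> bool) \<Rightarrow> 'v \<Rightarrow> 'v \<Rightarrow> 'v list \<Rightarrow> bool" where
  "gpath_from_to V E u v p \<longleftrightarrow> gpath V E p \<and> hd p = u \<and> last p = v"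

text \<open>Distance (number of edges of a shortest path); meaningful for connected graphs.\<close>
definition gdist :: "'v set \<Rightarrow> ('v \<Rightarrow> 'v \<Rightarrow> bool) \<Rightarrow> 'v \<Rightarrow> 'v \<Rightarrow> nat" where
  "gdist V E u v = (LEAST n. \<exists>p. gpath_from_to V E u v p \<and> length p = Suc n)"

definition shortest_path :: "'v set \<Rightarrow> ('v \<Rightarrow> 'v \<Rightarrow> bool) \<Rightarrow> 'v \<Rightarrow> 'v \<Rightarrow> 'v list \<Rightarrow> bool" where
  "shortest_path V E u v p \<longleftrightarrow> gpath_from_to V E u v p \<and> length p = Suc (gdist V E u v)"

definition strongly_resolves :: "'v set \<Rightarrow> ('v \<Rightarrow> 'v \<Rightarrow> bool) \<Rightarrow> 'v \<Rightarrow> 'v \<Rightarrow> 'v \<Rightarrow> bool" where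
  "strongly_resolves V E w u v \<longleftrightarrow>
     (\<exists>p. shortest_path V E u w p \<and> v \<in> set p) \<or> (\<exists>p. shortest_path V E v w p \<and> u \<in> set p)"

definition strong_resolving_set :: "'v set \<Rightarrow> ('v \<Rightarrow> 'v \<Rightarrow> bool) \<Rightarrow> 'v set \<Rightarrow> bool" where
  "strong_resolving_set V E W \<longleftrightarrow> W \<subseteq> V \<and>
     (\<forall>u\<in>V. \<forall>v\<in>V. u \<noteq> v \<longrightarrow> (\<exists>w\<in>W. strongly_resolves V E w u v))"

definition sdimM :: "'v set \<Rightarrow> ('v \<Rightarrow> 'v \<Rightarrow> bool) \<Rightarrow> enat" where
  "sdimM V E = (INF W \<in> {W. strong_resolving_set V E W}. (if finite W then enat (card W) else \<infinity>))"

end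

theory Submission
  imports Defs "HOL-Library.FuncSet"
begin

text \<open>Every nonzero element of Z*(L) lies above an atom, and two atoms a, b are joined in G^c(L)
  through a \<squnion> b, which lies in Z*(L) because a third atom c meets both a and b trivially and hence,
  by 0-distributivity, meets a \<squnion> b trivially. So G^c(L) is connected of diameter at most 4.
  In a connected graph of bounded diameter, a strong resolving set W embeds the vertices into
  the finitely many distance vectors W \<rightarrow> {0..4}, since a vertex strongly resolving u and v has
  different distances to them; conversely, the whole vertex set strongly resolves itself.\<close>

lemma gdist_le_length:
  assumes "gpath_from_to V E u v p"
  shows "gdist V E u v \<le> length p - 1"
proof -
  have "length p = Suc (length p - 1)"
    using assms by (simp add: gpath_from_to_def gpath_def)
  then show ?thesis
    unfolding gdist_def using assms by (intro Least_le) blast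
qed

lemma shortest_path_exists:
  assumes "gpath_from_to V E u v p"
  shows "\<exists>q. shortest_path V E u v q"
proof -
  have "length p = Suc (length p - 1)"
    using assms by (simp add: gpath_from_to_def gpath_def)
  then have "\<exists>n q. gpath_from_to V E u v q \<and> length q = Suc n"
    using assms by blast
  then show ?thesis
    unfolding shortest_path_def gdist_def by (rule LeastI_ex)
qed

lemma gpath_from_to_snoc:
  assumes "gpath_from_to V E x y p" "z \<in> V" "E y z"
  shows "gpath_from_to V E x z (p @ [z])"
proof -
  have p: "p \<noteq> []" "set p \<subseteq> V" "hd p = x" "last p = y"
    and edges: "\<And>i. Suc i < length p \<Longrightarrow> E (p!i) (p!Suc i)"
    using assms(1) by (auto simp: gpath_from_to_def gpath_def)
  have "E ((p @ [z])!i) ((p @ [z])!Suc i)" if "Suc i < length (p @ [z])" for i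
  proof (cases "Suc i < length p")
    case True
    then show ?thesis using edges by (simp add: nth_append)
  next
    case False
    with that have "i = length p - 1" "Suc i = length p" by simp_all
    then show ?thesis
      using p(1,4) assms(3) by (simp add: nth_append last_conv_nth)
  qed
  then show ?thesis
    using p assms(2) by (auto simp: gpath_from_to_def gpath_def)
qed

lemma gpath_from_to_extend:
  assumes "gpath_from_to V E x y p" "z \<in> V" "y = z \<or> E y z"
  shows "\<exists>q. gpath_from_to V E x z q \<and> length q \<le> Suc (length p)"
  using assms gpath_from_to_snoc[OF assms(1,2)] by force

lemma shortest_path_through_gdist_less:
  assumes "shortest_path V E u w p" "v \<in> set p" "u \<noteq> v"
  shows "gdist V E v w < gdist V E u w"
proof -
  have p: "p \<noteq> []" "set p \<subseteq> V" "hd p = u" "last p = w"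
    and edges: "\<And>i. Suc i < length p \<Longrightarrow> E (p!i) (p!Suc i)"
    and len: "length p = Suc (gdist V E u w)"
    using assms(1) by (auto simp: shortest_path_def gpath_from_to_def gpath_def)
  obtain i where i: "i < length p" "p!i = v"
    using assms(2) by (auto simp: in_set_conv_nth)
  have "i \<noteq> 0"
    using i p(1,3) assms(3) by (metis hd_conv_nth)
  have "gpath_from_to V E v w (drop i p)"
    unfolding gpath_from_to_def gpath_def
    using i p edges set_drop_subset[of i p]
    by (auto simp: hd_drop_conv_nth add.commute[of i])
  then have "gdist V E v w \<le> length p - i - 1"
    using gdist_le_length by fastforce
  then show ?thesis
    using len i(1) \<open>i \<noteq> 0\<close> by simp
qed

lemma strongly_resolves_gdist_neq:
  assumes "strongly_resolves V E w u v" "u \<noteq> v"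
  shows "gdist V E u w \<noteq> gdist V E v w"
  using assms shortest_path_through_gdist_less
  unfolding strongly_resolves_def by (metis less_irrefl)

lemma finite_if_finite_strong_resolving_set:
  assumes diam: "\<And>x y. x \<in> V \<Longrightarrow> y \<in> V \<Longrightarrow> gdist V E x y \<le> K"
    and W: "strong_resolving_set V E W" "finite W"
  shows "finite V"
proof -
  let ?dists = "\<lambda>u. restrict (gdist V E u) W"
  have "inj_on ?dists V"
  proof (rule inj_onI, rule ccontr)
    fix u v
    assume uv: "u \<in> V" "v \<in> V" "?dists u = ?dists v" "u \<noteq> v"
    then obtain w where "w \<in> W" "strongly_resolves V E w u v"
      using W(1) unfolding strong_resolving_set_def by blast
    then show False
      using uv(3,4) strongly_resolves_gdist_neq by (metis restrict_apply')
  qed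
  moreover have "?dists ` V \<subseteq> W \<rightarrow>\<^sub>E {..K}"
    using diam W(1) by (auto simp: strong_resolving_set_def)
  then have "finite (?dists ` V)"
    by (rule finite_subset) (simp add: finite_PiE W(2))
  ultimately show ?thesis
    using finite_imageD by blast
qed

lemma strong_resolving_set_vertices:
  assumes conn: "\<And>x y. x \<in> V \<Longrightarrow> y \<in> V \<Longrightarrow> \<exists>p. gpath_from_to V E x y p"
  shows "strong_resolving_set V E V"
  unfolding strong_resolving_set_def
proof (intro conjI ballI impI)
  fix u v
  assume "u \<in> V" "v \<in> V" "u \<noteq> v"
  then obtain q where q: "shortest_path V E v u q"
    using conn shortest_path_exists by metis
  then have "u \<in> set q"
    by (auto simp: shortest_path_def gpath_from_to_def gpath_def)
  then show "\<exists>w\<in>V. strongly_resolves V E w u v"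
    using q \<open>u \<in> V\<close> unfolding strongly_resolves_def by blast
qed simp

lemma sdimM_finite_iff:
  "sdimM V E \<noteq> \<infinity> \<longleftrightarrow> (\<exists>W. strong_resolving_set V E W \<and> finite W)"
proof
  assume "sdimM V E \<noteq> \<infinity>"
  then show "\<exists>W. strong_resolving_set V E W \<and> finite W"
    unfolding sdimM_def top_enat_def[symmetric] INF_top_conv
    by (auto split: if_splits simp: top_enat_def)
next
  assume "\<exists>W. strong_resolving_set V E W \<and> finite W"
  then obtain W where W: "strong_resolving_set V E W" "finite W"
    by blast
  then have "sdimM V E \<le> enat (card W)"
    unfolding sdimM_def by (metis (mono_tags, lifting) INF_lower mem_Collect_eq)
  then show "sdimM V E \<noteq> \<infinity>"
    by (cases "sdimM V E") auto
qed

lemma atoms_inf_eq_bot: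
  fixes a b :: "'a::bounded_lattice_bot"
  assumes "is_atom a" "is_atom b" "a \<noteq> b"
  shows "inf a b = bot"
  using assms unfolding is_atom_def by (metis inf.cobounded1 inf.cobounded2)

lemma atom_in_Zstar:
  fixes a b :: "'a::bounded_lattice_bot"
  assumes "is_atom a" "is_atom b" "a \<noteq> b"
  shows "a \<in> Zstar"
  using assms atoms_inf_eq_bot[OF assms] unfolding Zstar_def is_atom_def by blast

lemma sup_atoms_in_Zstar:
  fixes a b c :: "'a::bounded_lattice_bot"
  assumes "zero_distributive TYPE('a)"
    and "is_atom a" "is_atom b" "is_atom c" "c \<noteq> a" "c \<noteq> b"
  shows "sup a b \<in> Zstar"
proof -
  have "inf c (sup a b) = bot"
    using assms atoms_inf_eq_bot unfolding zero_distributive_def by blast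
  moreover have "sup a b \<noteq> bot" "c \<noteq> bot"
    using assms(2,4) unfolding is_atom_def by auto
  ultimately show ?thesis
    unfolding Zstar_def by (auto simp: inf_commute)
qed

lemma Gc_adj_or_eq_if_le:
  fixes x y :: "'a::bounded_lattice_bot"
  assumes "x \<le> y" "x \<noteq> bot"
  shows "x = y \<or> Gc_adj x y" "y = x \<or> Gc_adj y x"
  using assms by (auto simp: Gc_adj_def inf_absorb1 inf_absorb2)

lemma Gc_path_length_le_5:
  fixes u v :: "'a::bounded_lattice_bot"
  assumes zd: "zero_distributive TYPE('a)"
    and atomic: "atomic_lattice TYPE('a)"
    and three: "\<exists>a b c::'a. is_atom a \<and> is_atom b \<and> is_atom c \<and> a \<noteq> b \<and> a \<noteq> c \<and> b \<noteq> c"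
    and uv: "u \<in> Zstar" "v \<in> Zstar"
  shows "\<exists>p. gpath_from_to Zstar Gc_adj u v p \<and> length p \<le> 5"
proof -
  obtain a b where a: "is_atom a" "a \<le> u" and b: "is_atom b" "b \<le> v"
    using atomic uv unfolding atomic_lattice_def Zstar_def by blast
  obtain c where c: "is_atom c" "c \<noteq> a" "c \<noteq> b"
    using three by metis
  have "a \<in> Zstar" "b \<in> Zstar"
    using three atom_in_Zstar a(1) b(1) by metis+
  moreover have "sup a b \<in> Zstar"
    using sup_atoms_in_Zstar[OF zd a(1) b(1) c] .
  moreover have "a \<noteq> bot" "b \<noteq> bot"
    using a(1) b(1) by (simp_all add: is_atom_def)
  ultimately have steps: "u = a \<or> Gc_adj u a" "a = sup a b \<or> Gc_adj a (sup a b)"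
      "sup a b = b \<or> Gc_adj (sup a b) b" "b = v \<or> Gc_adj b v"
    using Gc_adj_or_eq_if_le[OF a(2)] Gc_adj_or_eq_if_le[OF sup_ge1[of a b]]
      Gc_adj_or_eq_if_le[OF sup_ge2[of b a]] Gc_adj_or_eq_if_le[OF b(2)] by auto
  have p0: "gpath_from_to Zstar Gc_adj u u [u]"
    using uv(1) by (simp add: gpath_from_to_def gpath_def)
  obtain p1 where p1: "gpath_from_to Zstar Gc_adj u a p1" "length p1 \<le> 2"
    using gpath_from_to_extend[OF p0 \<open>a \<in> Zstar\<close> steps(1)] by fastforce
  obtain p2 where p2: "gpath_from_to Zstar Gc_adj u (sup a b) p2" "length p2 \<le> 3"
    using gpath_from_to_extend[OF p1(1) \<open>sup a b \<in> Zstar\<close> steps(2)] p1(2) by fastforce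
  obtain p3 where p3: "gpath_from_to Zstar Gc_adj u b p3" "length p3 \<le> 4"
    using gpath_from_to_extend[OF p2(1) \<open>b \<in> Zstar\<close> steps(3)] p2(2) by fastforce
  show ?thesis
    using gpath_from_to_extend[OF p3(1) uv(2) steps(4)] p3(2) by fastforce
qed

theorem corollary3p3:
  assumes "zero_distributive TYPE('a::bounded_lattice_bot)"
    and "atomic_lattice TYPE('a)"
    and "\<exists>a b c::'a. is_atom a \<and> is_atom b \<and> is_atom c \<and> a \<noteq> b \<and> a \<noteq> c \<and> b \<noteq> c"
  shows "sdimM (Zstar :: 'a set) Gc_adj \<noteq> \<infinity> \<longleftrightarrow> finite (Zstar :: 'a set)"
proof
  assume "sdimM (Zstar :: 'a set) Gc_adj \<noteq> \<infinity>"
  then obtain W where "strong_resolving_set (Zstar :: 'a set) Gc_adj W" "finite W"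
    using sdimM_finite_iff by blast
  moreover have "gdist Zstar Gc_adj x y \<le> 4" if "x \<in> Zstar" "y \<in> (Zstar :: 'a set)" for x y
    using Gc_path_length_le_5[OF assms that] gdist_le_length by fastforce
  ultimately show "finite (Zstar :: 'a set)"
    using finite_if_finite_strong_resolving_set by blast
next
  assume "finite (Zstar :: 'a set)"
  moreover have "strong_resolving_set (Zstar :: 'a set) Gc_adj Zstar"
    using Gc_path_length_le_5[OF assms] by (metis strong_resolving_set_vertices)
  ultimately show "sdimM (Zstar :: 'a set) Gc_adj \<noteq> \<infinity>"
    using sdimM_finite_iff by blast
qed

end
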